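(* Let $(S_n,X_n)_{n\ge 0}$ be an alternating non-homogeneous semi-Markov process with $S_0=1$, $X_0=0$, whose semi-Markov kernels are, for each $x\ge0$, Weibull distributions $$G_T(x,\tau)=1-e^{-(\lambda_T(x)\tau)^{k_T(x)}},\qquad \tau\ge0,\ T\in\{Y,Z\},$$ with measurable shape functions $k_Y,k_Z:[0,\infty)\to(0,\infty)$ and rate functions $\lambda_Y,\lambda_Z:[0,\infty)\to(0,\infty)$. Suppose (i) there is $c>0$ with $\lambda_Y(x)\le c$ and $\lambda_Z(x)\le c$ for all $x\ge0$, and (ii) either there is $k\ge1$ with $1\le k_Y(x)\le k$ and $1\le k_Z(x)\le k$ for all $x\ge 0$, or there is $k>0$ with $k_Y(x)=k_Z(x)=k$ for all $x\ge0$. Then $\mathbb P(X_\infty<\infty)=0$.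
   Context: Let $(S_n,X_n)_{n\ge0}$ be random variables on a probability space with $S_n\in\{0,1\}$, $0=X_0\le X_1\le X_2\le\cdots$, $S_0=1$, and alternating states: $S_n=1$ for even $n$ and $S_n=0$ for odd $n$. Write $T_{n+1}=X_{n+1}-X_n$ (sojourn times). The process is called an alternating non-homogeneous semi-Markov process with semi-Markov kernels $G_Y,G_Z$ if for every $n\ge 0$ the conditional distribution of $T_{n+1}$ given $(S_0,X_0),\dots,(S_n,X_n)$ depends only on $(S_n,X_n)$ (and not on $n$), with $\mathbb P(T_{n+1}\le \tau\mid S_n=1,X_n=x)=G_Y(x,\tau)$ and $\mathbb P(T_{n+1}\le\tau\mid S_n=0,X_n=x)=G_Z(x,\tau)$ for all $x,\tau\ge 0$; here for each $x\ge0$, $G_Y(x,\cdot)$ and $G_Z(x,\cdot)$ are distribution functions on $[0,\infty)$, jointly measurable in $(x,\tau)$, absolutely continuous with densities $g_Y(x,\cdot)$, $g_Z(x,\cdot)$. Periods spent in state $1$ are called $Y$-phases, periods in state $0$ are $Z$-phases. The explosion time is $X_\infty=\lim_{n\to\infty}X_n$. *)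

theory Defs
  imports "HOL-Probability.Probability"
begin

definition weibull_kernel :: "(real \<Rightarrow> real) \<Rightarrow> (real \<Rightarrow> real) \<Rightarrow> real \<Rightarrow> real \<Rightarrow> real" where
  "weibull_kernel lam kk x \<tau> = 1 - exp (- ((lam x * \<tau>) powr (kk x)))"

definition alt_state :: "nat \<Rightarrow> nat" where
  "alt_state n = (if even n then 1 else 0)"

text \<open>Alternating non-homogeneous semi-Markov process with kernels GY, GZ,
  started in S_0 = 1, X_0 = 0.  Since the states are deterministic, the history
  sigma-algebra generated by (S_0,X_0),...,(S_n,X_n) is generated by (X_0,...,X_n),
  i.e. consists of the sets {(X_0,...,X_n) \<in> B} for Borel B.  The conditional
  distribution of T_{n+1} = X_{n+1} - X_n given this history is G_{S_n}(X_n, .).\<close>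
definition alt_semi_markov ::
  "'a measure \<Rightarrow> (nat \<Rightarrow> 'a \<Rightarrow> real) \<Rightarrow> (real \<Rightarrow> real \<Rightarrow> real) \<Rightarrow> (real \<Rightarrow> real \<Rightarrow> real) \<Rightarrow> bool" where
  "alt_semi_markov M X GY GZ \<longleftrightarrow>
     prob_space M \<and>
     (\<forall>n. X n \<in> borel_measurable M) \<and>
     (\<forall>\<omega>\<in>space M. X 0 \<omega> = 0 \<and> (\<forall>n. X n \<omega> \<le> X (Suc n) \<omega>)) \<and>
     (\<forall>n \<tau> (B :: (nat \<Rightarrow> real) set). \<tau> \<ge> 0 \<longrightarrow> B \<in> sets (PiM {..n} (\<lambda>_. borel)) \<longrightarrow>
        measure M ({\<omega>\<in>space M. X (Suc n) \<omega> - X n \<omega> \<le> \<tau>}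
                    \<inter> {\<omega>\<in>space M. (\<lambda>i\<in>{..n}. X i \<omega>) \<in> B})
        = set_lebesgue_integral M {\<omega>\<in>space M. (\<lambda>i\<in>{..n}. X i \<omega>) \<in> B}
            (\<lambda>\<omega>. (if alt_state n = 1 then GY else GZ) (X n \<omega>) \<tau>))"

end

theory Submission
  imports Defs
begin

text \<open>If every sojourn time is at most d > 0 with conditional probability at most q < 1,
  whatever the history, then n consecutive sojourn times are all at most d with probability
  at most q^n.  On the event of non-explosion the increments of the bounded monotone path
  X_n eventually stay below d, so this event is a countable union of null sets.  For Weibull
  kernels with rates bounded by c, d = 1/c and q = 1 - exp(-1) work for every shape, since
  (lambda tau)^k \<le> 1 when lambda tau \<le> 1.\<close>

lemma eventually_increments_le_if_SUP_finite:
  fixes f :: "nat \<Rightarrow> real"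
  assumes "mono f" "(SUP n. ereal (f n)) < \<infinity>" "d > 0"
  obtains m where "\<And>j. m \<le> j \<Longrightarrow> f (Suc j) - f j \<le> d"
proof -
  have "ereal (f 0) \<le> (SUP n. ereal (f n))" by (rule SUP_upper) auto
  then obtain L where L: "(SUP n. ereal (f n)) = ereal L"
    using assms(2) by (cases "SUP n. ereal (f n)") auto
  have le_L: "f n \<le> L" for n using L by (metis SUP_upper UNIV_I ereal_less_eq(3))
  have "ereal (L - d) < (SUP n. ereal (f n))" using L assms(3) by simp
  then obtain m where m: "L - d < f m" by (auto simp: less_SUP_iff)
  show thesis
  proof
    fix j assume "m \<le> j"
    then have "f m \<le> f j" using assms(1) by (metis monoD)
    then show "f (Suc j) - f j \<le> d" using le_L[of "Suc j"] m by linarith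
  qed
qed

definition small_increments :: "'a measure \<Rightarrow> (nat \<Rightarrow> 'a \<Rightarrow> real) \<Rightarrow> real \<Rightarrow> nat \<Rightarrow> nat \<Rightarrow> 'a set"
  where "small_increments M X d m n = {\<omega>\<in>space M. \<forall>j\<in>{m..<n}. X (Suc j) \<omega> - X j \<omega> \<le> d}"

lemma small_increments_history:
  "{f \<in> space (PiM {..n} (\<lambda>_. borel)). \<forall>j\<in>{m..<n}. f (Suc j) - f j \<le> (d::real)}
    \<in> sets (PiM {..n} (\<lambda>_. borel))"
proof -
  have "Measurable.pred (PiM {..n} (\<lambda>_. borel)) (\<lambda>f. f (Suc j) - f j \<le> d)"
    if "j \<in> {m..<n}" for j
  proof -
    have "(\<lambda>f. f (Suc j) - f j) \<in> borel_measurable (PiM {..n} (\<lambda>_. borel::real measure))"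
      using that by (intro borel_measurable_diff measurable_component_singleton) auto
    then show ?thesis by measurable
  qed
  then show ?thesis by (intro pred_intros_finite[unfolded pred_def]) auto
qed

lemma history_sets:
  assumes "\<And>i. X i \<in> borel_measurable M" "B \<in> sets (PiM {..n} (\<lambda>_. borel))"
  shows "{\<omega>\<in>space M. (\<lambda>i\<in>{..n}. X i \<omega>) \<in> B} \<in> sets M"
proof -
  have "(\<lambda>\<omega>. \<lambda>i\<in>{..n}. X i \<omega>) \<in> M \<rightarrow>\<^sub>M PiM {..n} (\<lambda>_. borel)"
    using assms(1) by (intro measurable_restrict) auto
  from measurable_sets[OF this assms(2)] show ?thesis by (simp add: vimage_def Int_def conj_commute)
qed

context
  fixes M :: "'a measure" and X :: "nat \<Rightarrow> 'a \<Rightarrow> real" and d q :: real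
  assumes prob: "prob_space M"
    and X_meas: "\<And>n. X n \<in> borel_measurable M"
    and step: "\<And>n B. B \<in> sets (PiM {..n} (\<lambda>_. borel)) \<Longrightarrow>
      measure M ({\<omega>\<in>space M. X (Suc n) \<omega> - X n \<omega> \<le> d} \<inter> {\<omega>\<in>space M. (\<lambda>i\<in>{..n}. X i \<omega>) \<in> B})
        \<le> q * measure M {\<omega>\<in>space M. (\<lambda>i\<in>{..n}. X i \<omega>) \<in> B}"
    and q: "0 \<le> q" "q < 1"
begin

interpretation prob_space M by (rule prob)

lemma small_increments_sets: "small_increments M X d m n \<in> sets M"
  unfolding small_increments_def using X_meas by measurable

lemma measure_small_increments_le: "measure M (small_increments M X d m (m + N)) \<le> q ^ N"
proof (induction N)
  case 0
  then show ?case by simp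
next
  case (Suc N)
  define n where "n = m + N"
  define B where "B = {f \<in> space (PiM {..n} (\<lambda>_. borel)). \<forall>j\<in>{m..<n}. f (Suc j) - f j \<le> d}"
  have B: "B \<in> sets (PiM {..n} (\<lambda>_. borel))"
    unfolding B_def by (rule small_increments_history)
  have history: "{\<omega>\<in>space M. (\<lambda>i\<in>{..n}. X i \<omega>) \<in> B} = small_increments M X d m n"
    unfolding B_def small_increments_def by (auto simp: space_PiM)
  have "small_increments M X d m (m + Suc N)
      = {\<omega>\<in>space M. X (Suc n) \<omega> - X n \<omega> \<le> d} \<inter> small_increments M X d m n"
    unfolding small_increments_def n_def by (auto simp: less_Suc_eq)
  then have "measure M (small_increments M X d m (m + Suc N))
      \<le> q * measure M (small_increments M X d m n)"
    using step[OF B] unfolding history by simp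
  also have "\<dots> \<le> q * q ^ N" using Suc q unfolding n_def by (intro mult_left_mono) auto
  finally show ?case by simp
qed

lemma null_sets_small_increments_forever: "(\<Inter>N. small_increments M X d m (m + N)) \<in> null_sets M"
proof -
  let ?A = "\<Inter>N. small_increments M X d m (m + N)"
  have A: "?A \<in> sets M" using small_increments_sets by auto
  have "measure M ?A \<le> q ^ N" for N
  proof -
    have "?A \<subseteq> small_increments M X d m (m + N)" by blast
    then have "measure M ?A \<le> measure M (small_increments M X d m (m + N))"
      using small_increments_sets by (rule finite_measure_mono)
    then show ?thesis using measure_small_increments_le[of m N] by linarith
  qed
  moreover have "(\<lambda>N. q ^ N) \<longlonglongrightarrow> 0" using q by (intro LIMSEQ_power_zero) auto
  ultimately have "measure M ?A \<le> 0" by (intro LIMSEQ_le_const[of "\<lambda>N. q ^ N" 0]) auto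
  then have "measure M ?A = 0" using measure_nonneg by (rule order.antisym)
  then show ?thesis using A by (simp add: emeasure_eq_measure null_sets_def)
qed

lemma measure_non_explosion_eq_0:
  assumes mono: "\<And>\<omega> n. \<omega> \<in> space M \<Longrightarrow> X n \<omega> \<le> X (Suc n) \<omega>" and "d > 0"
  shows "measure M {\<omega>\<in>space M. (SUP n. ereal (X n \<omega>)) < \<infinity>} = 0"
proof -
  have null: "(\<Union>m. \<Inter>N. small_increments M X d m (m + N)) \<in> null_sets M"
    using null_sets_small_increments_forever by auto
  have "{\<omega>\<in>space M. (SUP n. ereal (X n \<omega>)) < \<infinity>} \<subseteq> (\<Union>m. \<Inter>N. small_increments M X d m (m + N))"
  proof safe
    fix \<omega> assume \<omega>: "\<omega> \<in> space M" "(SUP n. ereal (X n \<omega>)) < \<infinity>"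
    moreover have "mono (\<lambda>n. X n \<omega>)" using mono \<omega>(1) by (simp add: mono_iff_le_Suc)
    ultimately obtain m where "\<And>j. m \<le> j \<Longrightarrow> X (Suc j) \<omega> - X j \<omega> \<le> d"
      using eventually_increments_le_if_SUP_finite \<open>d > 0\<close> by metis
    then have "\<omega> \<in> small_increments M X d m (m + N)" for N
      using \<omega>(1) by (auto simp: small_increments_def)
    then show "\<omega> \<in> (\<Union>m. \<Inter>N. small_increments M X d m (m + N))" by blast
  qed
  with null show ?thesis
    by (cases "{\<omega>\<in>space M. (SUP n. ereal (X n \<omega>)) < \<infinity>} \<in> sets M")
      (auto simp: measure_eq_0_null_sets measure_notin_sets dest: null_sets_subset)
qed

end

lemma weibull_kernel_le:
  assumes "0 < lam x" "lam x \<le> c" "0 \<le> kk x"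
  shows "weibull_kernel lam kk x (1 / c) \<le> 1 - exp (-1)"
proof -
  have "(lam x * (1 / c)) powr kk x \<le> 1"
    using assms by (intro powr_le1) (auto simp: field_simps)
  then show ?thesis unfolding weibull_kernel_def by simp
qed

lemma (in prob_space) set_integral_le_const_measure:
  fixes f :: "'a \<Rightarrow> real"
  assumes "A \<in> sets M" "\<And>x. x \<in> space M \<Longrightarrow> f x \<le> q" "0 \<le> q"
  shows "set_lebesgue_integral M A f \<le> q * measure M A"
proof (cases "set_integrable M A f")
  case True
  have "set_lebesgue_integral M A f \<le> set_lebesgue_integral M A (\<lambda>_. q)"
    unfolding set_lebesgue_integral_def
  proof (rule integral_mono)
    show "integrable M (\<lambda>x. indicator A x *\<^sub>R f x)"
      using True by (simp add: set_integrable_def)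
    show "integrable M (\<lambda>x. indicator A x *\<^sub>R q)"
      using assms(1) by (simp add: emeasure_eq_measure)
    show "indicator A x *\<^sub>R f x \<le> indicator A x *\<^sub>R q" if "x \<in> space M" for x
      using assms(2)[OF that] by (simp add: indicator_def)
  qed
  then show ?thesis using assms(1) by (simp add: set_integral_const mult.commute)
next
  case False
  then show ?thesis using assms(3)
    by (simp add: set_lebesgue_integral_def set_integrable_def not_integrable_integral_eq)
qed

lemma alt_semi_markov_weibull_step_le:
  assumes proc: "alt_semi_markov M X (weibull_kernel lamY kY) (weibull_kernel lamZ kZ)"
    and pos: "\<forall>x\<ge>0. lamY x > 0 \<and> lamZ x > 0 \<and> kY x > 0 \<and> kZ x > 0"
    and c: "c > 0" "\<forall>x\<ge>0. lamY x \<le> c \<and> lamZ x \<le> c"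
    and B: "B \<in> sets (PiM {..n} (\<lambda>_. borel))"
  shows "measure M ({\<omega>\<in>space M. X (Suc n) \<omega> - X n \<omega> \<le> 1 / c} \<inter> {\<omega>\<in>space M. (\<lambda>i\<in>{..n}. X i \<omega>) \<in> B})
    \<le> (1 - exp (-1)) * measure M {\<omega>\<in>space M. (\<lambda>i\<in>{..n}. X i \<omega>) \<in> B}"
proof -
  interpret prob_space M using proc unfolding alt_semi_markov_def by blast
  have X_meas: "\<And>n. X n \<in> borel_measurable M"
    and X0: "\<And>\<omega>. \<omega> \<in> space M \<Longrightarrow> X 0 \<omega> = 0"
    and X_mono: "\<And>\<omega> n. \<omega> \<in> space M \<Longrightarrow> X n \<omega> \<le> X (Suc n) \<omega>"
    using proc unfolding alt_semi_markov_def by blast+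
  let ?G = "if alt_state n = 1 then weibull_kernel lamY kY else weibull_kernel lamZ kZ"
  have law: "measure M ({\<omega>\<in>space M. X (Suc n) \<omega> - X n \<omega> \<le> 1 / c} \<inter> {\<omega>\<in>space M. (\<lambda>i\<in>{..n}. X i \<omega>) \<in> B})
      = set_lebesgue_integral M {\<omega>\<in>space M. (\<lambda>i\<in>{..n}. X i \<omega>) \<in> B} (\<lambda>\<omega>. ?G (X n \<omega>) (1 / c))"
    using proc B c(1) unfolding alt_semi_markov_def by (simp only: less_imp_le zero_le_divide_1_iff)
  have kernel_le: "?G (X n \<omega>) (1 / c) \<le> 1 - exp (-1)" if "\<omega> \<in> space M" for \<omega>
  proof -
    have "0 \<le> X n \<omega>"
      using X0[OF that] X_mono[OF that] by (metis le0 lift_Suc_mono_le[of "\<lambda>n. X n \<omega>"])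
    then have "0 < lamY (X n \<omega>)" "lamY (X n \<omega>) \<le> c" "0 \<le> kY (X n \<omega>)"
      and "0 < lamZ (X n \<omega>)" "lamZ (X n \<omega>) \<le> c" "0 \<le> kZ (X n \<omega>)"
      using pos c(2) by (auto simp: less_imp_le)
    then show ?thesis by (simp add: weibull_kernel_le)
  qed
  show ?thesis
    unfolding law by (rule set_integral_le_const_measure[OF history_sets[OF X_meas B] kernel_le]) auto
qed

theorem proposition2:
  fixes M :: "'a measure" and X :: "nat \<Rightarrow> 'a \<Rightarrow> real"
    and lamY lamZ kY kZ :: "real \<Rightarrow> real"
  assumes meas: "lamY \<in> borel_measurable borel" "lamZ \<in> borel_measurable borel"
                "kY \<in> borel_measurable borel" "kZ \<in> borel_measurable borel"
    and pos: "\<forall>x\<ge>0. lamY x > 0 \<and> lamZ x > 0 \<and> kY x > 0 \<and> kZ x > 0"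
    and proc: "alt_semi_markov M X (weibull_kernel lamY kY) (weibull_kernel lamZ kZ)"
    and bnd_rate: "\<exists>c>0. \<forall>x\<ge>0. lamY x \<le> c \<and> lamZ x \<le> c"
    and shape: "(\<exists>k\<ge>1. \<forall>x\<ge>0. 1 \<le> kY x \<and> kY x \<le> k \<and> 1 \<le> kZ x \<and> kZ x \<le> k)
              \<or> (\<exists>k>0. \<forall>x\<ge>0. kY x = k \<and> kZ x = k)"
  shows "measure M {\<omega>\<in>space M. (SUP n. ereal (X n \<omega>)) < \<infinity>} = 0"
proof -
  obtain c where c: "c > 0" "\<forall>x\<ge>0. lamY x \<le> c \<and> lamZ x \<le> c" using bnd_rate by blast
  have "prob_space M" "\<And>n. X n \<in> borel_measurable M"
    using proc unfolding alt_semi_markov_def by blast+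
  moreover note alt_semi_markov_weibull_step_le[OF proc pos c]
  moreover have "0 \<le> 1 - exp (-1::real)" "1 - exp (-1::real) < 1" by auto
  moreover have "\<And>\<omega> n. \<omega> \<in> space M \<Longrightarrow> X n \<omega> \<le> X (Suc n) \<omega>"
    using proc unfolding alt_semi_markov_def by blast
  moreover have "0 < 1 / c" using c(1) by simp
  ultimately show ?thesis by (rule measure_non_explosion_eq_0)
qed

end
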